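(* Let $x^*\in\mathcal X$. If $\hat\eta_f(x^*,\hat{\mathbb Y}_d)=0$ for some $\hat{\mathbb Y}_d=\{y_d^1,\dots,y_d^k\}\subseteq\mathbb Y_d$, then $\eta_f(x^* )=0$, i.e. $x^*$ is feasible for $\mathcal U(x^* )$. If $r_f(x^*,u^* )>0$ for some $u^*\in\mathcal U(x^* )$, then $\eta_f(x^* )>0$, i.e. $x^*$ is infeasible for $\mathcal U(x^* )$.
   Context: $\mathcal X=\{x\in\mathbb R^{n_x}_+\times\mathbb Z^{m_x}_+: Ax\ge b\}$; $\mathcal U(x)=\{u\in\mathbb R^{n_u}_+: F(x)u\le h+Gx\}$, nonempty and bounded for $x\in\mathcal X$; $\mathcal Y(x,u)=\{(y_c,y_d)\in\mathbb R^{n_y}_+\times\mathbb Y_d: B_{2,c}y_c+B_{2,d}y_d\ge d-B_1x-Eu\}$, $\mathbb Y_d\subseteq\mathbb Z^{m_y}_+$ finite; $x$ is feasible for $\mathcal U(x)$ if $\mathcal Y(x,u)\ne\emptyset$ for all $u\in\mathcal U(x)$. $\tilde{\mathcal Y}(x,u)=\{(y_c,y_d,\tilde y): B_{2,c}y_c+B_{2,d}y_d+\mathbf1\tilde y\ge d-B_1x-Eu,\ y_c\ge0,\ y_d\in\mathbb Y_d,\ \tilde y\ge0\}$ ($\tilde y$ scalar). Define $\eta_f(x)=\max_{u\in\mathcal U(x)}\min\{\tilde y:(y_c,y_d,\tilde y)\in\tilde{\mathcal Y}(x,u)\}$; $r_f(x,u)=\min\{\tilde y:(y_c,y_d,\tilde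 y)\in\tilde{\mathcal Y}(x,u)\}$; and $\hat\eta_f(x,\hat{\mathbb Y}_d)=\max\{\hat\eta_f: u\in\mathcal U(x),\ \hat\eta_f\le\min\{\tilde y^t: B_{2,c}y_c^t+\mathbf1\tilde y^t\ge d-B_1x-Eu-B_{2,d}y_d^t,\ y_c^t\ge0,\ \tilde y^t\ge0\}\ \text{for } t=1,\dots,k\}$. *)

theory Defs
  imports "HOL-Analysis.Analysis"
begin

definition Xset :: "real^'x^'ra \<Rightarrow> real^'ra \<Rightarrow> 'x set \<Rightarrow> (real^'x) set" where
  "Xset A b Ix = {x. 0 \<le> x \<and> (\<forall>i\<in>Ix. x $ i \<in> \<int>) \<and> b \<le> A *v x}"

definition Uset :: "(real^'x \<Rightarrow> real^'u^'ru) \<Rightarrow> real^'ru \<Rightarrow> real^'x^'ru \<Rightarrow> real^'x \<Rightarrow> (real^'u) set" where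
  "Uset F h G x = {u. 0 \<le> u \<and> F x *v u \<le> h + G *v x}"

definition Yset :: "real^'x^'r \<Rightarrow> real^'u^'r \<Rightarrow> real^'yc^'r \<Rightarrow> real^'yd^'r \<Rightarrow> real^'r
     \<Rightarrow> (real^'yd) set \<Rightarrow> real^'x \<Rightarrow> real^'u \<Rightarrow> ((real^'yc) \<times> (real^'yd)) set" where
  "Yset B1 E B2c B2d d Yd x u =
     {(yc, yd). 0 \<le> yc \<and> yd \<in> Yd \<and> d - B1 *v x - E *v u \<le> B2c *v yc + B2d *v yd}"

definition feasible_for :: "(real^'x \<Rightarrow> real^'u^'ru) \<Rightarrow> real^'ru \<Rightarrow> real^'x^'ru \<Rightarrow>
     real^'x^'r \<Rightarrow> real^'u^'r \<Rightarrow> real^'yc^'r \<Rightarrow> real^'yd^'r \<Rightarrow> real^'r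
     \<Rightarrow> (real^'yd) set \<Rightarrow> real^'x \<Rightarrow> bool" where
  "feasible_for F h G B1 E B2c B2d d Yd x =
     (\<forall>u\<in>Uset F h G x. Yset B1 E B2c B2d d Yd x u \<noteq> {})"

definition Ytil :: "real^'x^'r \<Rightarrow> real^'u^'r \<Rightarrow> real^'yc^'r \<Rightarrow> real^'yd^'r \<Rightarrow> real^'r
     \<Rightarrow> (real^'yd) set \<Rightarrow> real^'x \<Rightarrow> real^'u \<Rightarrow> ((real^'yc) \<times> (real^'yd) \<times> real) set" where
  "Ytil B1 E B2c B2d d Yd x u =
     {(yc, yd, yt). 0 \<le> yc \<and> yd \<in> Yd \<and> 0 \<le> yt \<and>
        d - B1 *v x - E *v u \<le> B2c *v yc + B2d *v yd + yt *\<^sub>R (1::real^'r)}"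

definition r_f :: "real^'x^'r \<Rightarrow> real^'u^'r \<Rightarrow> real^'yc^'r \<Rightarrow> real^'yd^'r \<Rightarrow> real^'r
     \<Rightarrow> (real^'yd) set \<Rightarrow> real^'x \<Rightarrow> real^'u \<Rightarrow> real" where
  "r_f B1 E B2c B2d d Yd x u = Inf ((\<lambda>(yc, yd, yt). yt) ` Ytil B1 E B2c B2d d Yd x u)"

definition eta_f :: "(real^'x \<Rightarrow> real^'u^'ru) \<Rightarrow> real^'ru \<Rightarrow> real^'x^'ru \<Rightarrow>
     real^'x^'r \<Rightarrow> real^'u^'r \<Rightarrow> real^'yc^'r \<Rightarrow> real^'yd^'r \<Rightarrow> real^'r
     \<Rightarrow> (real^'yd) set \<Rightarrow> real^'x \<Rightarrow> real" where
  "eta_f F h G B1 E B2c B2d d Yd x = Sup (r_f B1 E B2c B2d d Yd x ` Uset F h G x)"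

definition lp_val :: "real^'x^'r \<Rightarrow> real^'u^'r \<Rightarrow> real^'yc^'r \<Rightarrow> real^'yd^'r \<Rightarrow> real^'r
     \<Rightarrow> real^'x \<Rightarrow> real^'u \<Rightarrow> real^'yd \<Rightarrow> real" where
  "lp_val B1 E B2c B2d d x u yd =
     Inf {yt. \<exists>yc. 0 \<le> yc \<and> 0 \<le> yt \<and>
        d - B1 *v x - E *v u - B2d *v yd \<le> B2c *v yc + yt *\<^sub>R (1::real^'r)}"

definition eta_hat :: "(real^'x \<Rightarrow> real^'u^'ru) \<Rightarrow> real^'ru \<Rightarrow> real^'x^'ru \<Rightarrow>
     real^'x^'r \<Rightarrow> real^'u^'r \<Rightarrow> real^'yc^'r \<Rightarrow> real^'yd^'r \<Rightarrow> real^'r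
     \<Rightarrow> real^'x \<Rightarrow> (real^'yd) set \<Rightarrow> real" where
  "eta_hat F h G B1 E B2c B2d d x Yhat =
     Sup {e. \<exists>u\<in>Uset F h G x. \<forall>yd\<in>Yhat. e \<le> lp_val B1 E B2c B2d d x u yd}"

end

theory Submission
  imports Defs
begin

text \<open>
  For fixed \<open>x\<close>, \<open>u\<close> and a discrete recourse \<open>yd\<close>, the feasible slacks of the continuous
  problem are the \<open>t \<ge> 0\<close> with \<open>w \<le> B2c y + t 1\<close> for some \<open>y \<ge> 0\<close>, where
  \<open>w = d - B1 x - E u - B2d yd\<close>; \<open>r_f x u\<close> is the infimum of the union of these sets over
  \<open>yd \<in> Yd\<close>. The set \<open>{z. \<exists>y \<ge> 0. z \<le> M y}\<close> is a finitely generated convex cone, hence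
  closed, so every slack problem attains its optimum, and optimal value zero yields an actual
  recourse \<open>(y, yd)\<close>. If \<open>eta_hat x Yhat = 0\<close>, every \<open>u\<close> admits some \<open>yd \<in> Yhat\<close> of optimal
  value zero, so \<open>x\<close> is feasible and \<open>r_f x\<close> vanishes on \<open>U(x)\<close>, whence \<open>eta_f x = 0\<close>.
  Conversely a recourse for \<open>u\<^sup>*\<close> would put \<open>0\<close> into the union and force \<open>r_f x u\<^sup>* \<le> 0\<close>, while
  \<open>eta_f x \<ge> r_f x u\<^sup>*\<close> because \<open>r_f x\<close> is bounded above on the bounded set \<open>U(x)\<close>.
\<close>

lemma sum_mem_convex_cone:
  assumes C: "convex_cone C" and "finite I"
    and "\<And>i. i \<in> I \<Longrightarrow> 0 \<le> c i" and "\<And>i. i \<in> I \<Longrightarrow> v i \<in> C"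
  shows "(\<Sum>i\<in>I. c i *\<^sub>R v i) \<in> C"
  using assms(2-4)
  by (induction I rule: finite_induct)
     (simp_all add: convex_cone_contains_0[OF C] convex_cone_add[OF C] convex_cone_scaleR[OF C])

lemma convex_cone_matrix_dominated:
  fixes M :: "real^'n^'m"
  shows "convex_cone {z. \<exists>y\<ge>0. z \<le> M *v y}"
  unfolding convex_cone_iff
proof (intro conjI ballI allI impI)
  show "0 \<in> {z. \<exists>y\<ge>0. z \<le> M *v y}" by (auto intro!: exI[of _ 0])
next
  fix a b assume "a \<in> {z. \<exists>y\<ge>0. z \<le> M *v y}" "b \<in> {z. \<exists>y\<ge>0. z \<le> M *v y}"
  then obtain ya yb where "0 \<le> ya" "a \<le> M *v ya" "0 \<le> yb" "b \<le> M *v yb" by auto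
  then show "a + b \<in> {z. \<exists>y\<ge>0. z \<le> M *v y}"
    by (auto intro!: exI[of _ "ya + yb"] add_mono simp: matrix_vector_right_distrib)
next
  fix a and c :: real assume "a \<in> {z. \<exists>y\<ge>0. z \<le> M *v y}" "0 \<le> c"
  then obtain y where "0 \<le> y" "a \<le> M *v y" by auto
  with \<open>0 \<le> c\<close> show "c *\<^sub>R a \<in> {z. \<exists>y\<ge>0. z \<le> M *v y}"
    by (auto intro!: exI[of _ "c *\<^sub>R y"] scaleR_left_mono scaleR_nonneg_nonneg simp: matrix_vector_mult_scaleR)
qed

lemma matrix_dominated_eq_convex_cone_hull:
  fixes M :: "real^'n^'m"
  shows "{z. \<exists>y\<ge>0. z \<le> M *v y} = convex_cone hull (range (\<lambda>j. column j M) \<union> range (\<lambda>i. - axis i 1))"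
    (is "?K = convex_cone hull ?S")
proof
  have "column j M = M *v axis j 1" for j
    by (simp add: vec_eq_iff matrix_vector_mult_def column_def axis_def if_distrib sum.If_cases cong del: if_weak_cong)
  moreover have "0 \<le> (axis j 1 :: real^'n)" for j
    by (simp add: less_eq_vec_def axis_def)
  moreover have "- axis i 1 \<le> M *v 0" for i
    by (simp add: less_eq_vec_def axis_def)
  ultimately have "?S \<subseteq> ?K" by fastforce
  then show "convex_cone hull ?S \<subseteq> ?K"
    using convex_cone_matrix_dominated by (rule hull_minimal)
next
  show "?K \<subseteq> convex_cone hull ?S"
  proof
    fix z assume "z \<in> ?K"
    then obtain y where y: "0 \<le> y" "z \<le> M *v y" by auto
    have "(\<Sum>j\<in>UNIV. (y$j) *\<^sub>R column j M) = M *v y"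
      by (simp add: matrix_mult_sum scalar_mult_eq_scaleR)
    moreover have "(\<Sum>i\<in>UNIV. ((M *v y - z)$i) *\<^sub>R (- axis i 1)) = z - M *v y"
      using basis_expansion[of "M *v y - z"] by (simp add: scalar_mult_eq_scaleR sum_negf)
    moreover have "(\<Sum>j\<in>UNIV. (y$j) *\<^sub>R column j M) \<in> convex_cone hull ?S"
      using y(1) by (intro sum_mem_convex_cone convex_cone_convex_cone_hull)
                    (auto simp: less_eq_vec_def intro: hull_inc)
    moreover have "(\<Sum>i\<in>UNIV. ((M *v y - z)$i) *\<^sub>R (- axis i 1)) \<in> convex_cone hull ?S"
      using y(2) by (intro sum_mem_convex_cone convex_cone_convex_cone_hull)
                    (auto simp: less_eq_vec_def intro: hull_inc)
    ultimately show "z \<in> convex_cone hull ?S"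
      by (metis convex_cone_hull_add add.commute diff_add_cancel)
  qed
qed

lemma closed_matrix_dominated:
  fixes M :: "real^'n^'m"
  shows "closed {z. \<exists>y\<ge>0. z \<le> M *v y}"
  by (simp add: matrix_dominated_eq_convex_cone_hull closed_convex_cone_hull)

definition slack_set :: "real^'c^'r \<Rightarrow> real^'r \<Rightarrow> real set" where
  "slack_set M w = {t. \<exists>y. 0 \<le> y \<and> 0 \<le> t \<and> w \<le> M *v y + t *\<^sub>R 1}"

lemma slack_set_nonneg: "t \<in> slack_set M w \<Longrightarrow> 0 \<le> t"
  by (auto simp: slack_set_def)

lemma bdd_below_UN_slack_set: "bdd_below (\<Union>i\<in>I. slack_set M (w i))"
  by (meson UN_E bdd_belowI slack_set_nonneg)

lemma bdd_below_slack_set: "bdd_below (slack_set M w)"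
  using bdd_below_UN_slack_set[of M "\<lambda>_. w" UNIV] by simp

lemma norm_mem_slack_set: "norm w \<in> slack_set M w"
proof -
  have "w \<le> M *v 0 + norm w *\<^sub>R 1"
    using component_le_norm_cart[of w] by (simp add: less_eq_vec_def abs_le_iff)
  then show ?thesis by (auto simp: slack_set_def)
qed

lemma slack_set_nonempty: "slack_set M w \<noteq> {}"
  using norm_mem_slack_set by blast

lemma zero_mem_slack_set_iff: "0 \<in> slack_set M w \<longleftrightarrow> (\<exists>y\<ge>0. w \<le> M *v y)"
  by (simp add: slack_set_def)

lemma closed_slack_set: "closed (slack_set M w)"
proof -
  have "slack_set M w = {0..} \<inter> (\<lambda>t. w - t *\<^sub>R 1) -` {z. \<exists>y\<ge>0. z \<le> M *v y}"
    by (auto simp: slack_set_def diff_le_eq)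
  moreover have "closed ((\<lambda>t. w - t *\<^sub>R 1) -` {z. \<exists>y\<ge>0. z \<le> M *v y})"
    by (intro closed_vimage closed_matrix_dominated continuous_intros)
  ultimately show ?thesis by auto
qed

lemma Inf_slack_set_mem: "Inf (slack_set M w) \<in> slack_set M w"
  by (rule closed_contains_Inf[OF slack_set_nonempty bdd_below_slack_set closed_slack_set])

lemma lp_val_eq_Inf_slack_set:
  "lp_val B1 E B2c B2d d x u yd = Inf (slack_set B2c (d - B1 *v x - E *v u - B2d *v yd))"
  by (simp add: lp_val_def slack_set_def)

lemma r_f_eq_Inf_slack_sets:
  "r_f B1 E B2c B2d d Yd x u = Inf (\<Union>yd\<in>Yd. slack_set B2c (d - B1 *v x - E *v u - B2d *v yd))"
proof -
  have "(\<lambda>(yc, yd, yt). yt) ` Ytil B1 E B2c B2d d Yd x u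
        = (\<Union>yd\<in>Yd. slack_set B2c (d - B1 *v x - E *v u - B2d *v yd))"
    by (force simp: Ytil_def slack_set_def diff_le_eq algebra_simps image_iff)
  then show ?thesis by (simp add: r_f_def)
qed

lemma Yset_nonempty_iff:
  "Yset B1 E B2c B2d d Yd x u \<noteq> {} \<longleftrightarrow>
     (\<exists>yd\<in>Yd. 0 \<in> slack_set B2c (d - B1 *v x - E *v u - B2d *v yd))"
  by (force simp: Yset_def zero_mem_slack_set_iff diff_le_eq algebra_simps)

lemma lp_val_nonneg: "0 \<le> lp_val B1 E B2c B2d d x u yd"
  by (metis Inf_slack_set_mem lp_val_eq_Inf_slack_set slack_set_nonneg)

lemma lp_val_le_norm: "lp_val B1 E B2c B2d d x u yd \<le> norm (d - B1 *v x - E *v u - B2d *v yd)"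
  unfolding lp_val_eq_Inf_slack_set by (rule cInf_lower[OF norm_mem_slack_set bdd_below_slack_set])

lemma lp_val_eq_0_iff:
  "lp_val B1 E B2c B2d d x u yd = 0 \<longleftrightarrow> 0 \<in> slack_set B2c (d - B1 *v x - E *v u - B2d *v yd)"
  by (metis Inf_slack_set_mem bdd_below_slack_set cInf_lower lp_val_eq_Inf_slack_set lp_val_nonneg order_antisym)

lemma r_f_le_lp_val:
  assumes "yd \<in> Yd"
  shows "r_f B1 E B2c B2d d Yd x u \<le> lp_val B1 E B2c B2d d x u yd"
  unfolding r_f_eq_Inf_slack_sets lp_val_eq_Inf_slack_set
  by (rule cInf_superset_mono[OF slack_set_nonempty bdd_below_UN_slack_set]) (use assms in blast)

lemma r_f_nonneg: "Yd \<noteq> {} \<Longrightarrow> 0 \<le> r_f B1 E B2c B2d d Yd x u"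
  unfolding r_f_eq_Inf_slack_sets
  by (rule cInf_greatest) (auto simp: slack_set_nonneg slack_set_nonempty)

lemma r_f_nonpos_if_Yset_nonempty:
  "Yset B1 E B2c B2d d Yd x u \<noteq> {} \<Longrightarrow> r_f B1 E B2c B2d d Yd x u \<le> 0"
  unfolding Yset_nonempty_iff r_f_eq_Inf_slack_sets
  by (auto intro!: cInf_lower bdd_below_UN_slack_set)

lemma bdd_above_lp_val_image:
  assumes "bounded U"
  shows "bdd_above ((\<lambda>u. lp_val B1 E B2c B2d d x u yd) ` U)"
proof -
  obtain K where K: "\<And>u. u \<in> U \<Longrightarrow> norm (E *v u) \<le> K"
    using bounded_linear_image[OF assms matrix_vector_mul_bounded_linear[of E]]
    unfolding bounded_iff by blast
  have "lp_val B1 E B2c B2d d x u yd \<le> norm (d - B1 *v x - B2d *v yd) + K" if "u \<in> U" for u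
  proof -
    have "lp_val B1 E B2c B2d d x u yd \<le> norm (d - B1 *v x - B2d *v yd - E *v u)"
      using lp_val_le_norm[of B1 E B2c B2d d x u yd] by (simp add: algebra_simps)
    also have "\<dots> \<le> norm (d - B1 *v x - B2d *v yd) + norm (E *v u)"
      by (rule norm_triangle_ineq4)
    finally show ?thesis using K[OF that] by linarith
  qed
  then show ?thesis by (rule bdd_aboveI2)
qed

lemma r_f_le_eta_f:
  assumes "bounded (Uset F h G x)" and "u \<in> Uset F h G x"
  shows "r_f B1 E B2c B2d d Yd x u \<le> eta_f F h G B1 E B2c B2d d Yd x"
proof -
  have "bdd_above (r_f B1 E B2c B2d d Yd x ` Uset F h G x)"
  proof (cases "Yd = {}")
    case True
    \<comment> \<open>then \<open>r_f\<close> is the junk constant \<open>Inf {}\<close>\<close>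
    then show ?thesis by (simp add: r_f_eq_Inf_slack_sets image_constant_conv)
  next
    case False
    then obtain yd where "yd \<in> Yd" by blast
    then obtain K where "\<And>u. u \<in> Uset F h G x \<Longrightarrow> lp_val B1 E B2c B2d d x u yd \<le> K"
      using bdd_above_lp_val_image[OF assms(1), of B1 E B2c B2d d x yd] by (auto simp: bdd_above_def)
    with \<open>yd \<in> Yd\<close> show ?thesis
      by (intro bdd_aboveI2[of _ _ K]) (meson order_trans r_f_le_lp_val)
  qed
  with assms(2) show ?thesis
    unfolding eta_f_def by (intro cSup_upper imageI)
qed

lemma ex_lp_val_eq_0_if_eta_hat_eq_0:
  assumes "finite Yhat" and "Yhat \<noteq> {}" and "bounded (Uset F h G x)"
    and "eta_hat F h G B1 E B2c B2d d x Yhat = 0" and "u \<in> Uset F h G x"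
  shows "\<exists>yd\<in>Yhat. lp_val B1 E B2c B2d d x u yd = 0"
proof -
  let ?lp = "lp_val B1 E B2c B2d d x"
  define S where "S = {e. \<exists>u\<in>Uset F h G x. \<forall>yd\<in>Yhat. e \<le> ?lp u yd}"
  obtain yd0 where "yd0 \<in> Yhat" using assms(2) by blast
  moreover obtain K where "\<And>u. u \<in> Uset F h G x \<Longrightarrow> ?lp u yd0 \<le> K"
    using bdd_above_lp_val_image[OF assms(3), of B1 E B2c B2d d x yd0] by (auto simp: bdd_above_def)
  ultimately have "bdd_above S"
    unfolding S_def by (intro bdd_aboveI[of _ K]) (blast intro: order_trans)
  have "Min (?lp u ` Yhat) \<in> S"
    using assms(1,5) unfolding S_def by (blast intro: Min_le finite_imageI imageI)
  then have "Min (?lp u ` Yhat) \<le> 0"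
    using cSup_upper[OF _ \<open>bdd_above S\<close>] assms(4) by (simp add: eta_hat_def S_def)
  moreover have "Min (?lp u ` Yhat) \<in> ?lp u ` Yhat"
    using assms(1,2) by (intro Min_in) auto
  ultimately obtain yd where "yd \<in> Yhat" "?lp u yd \<le> 0"
    by auto
  then show ?thesis
    using lp_val_nonneg[of B1 E B2c B2d d x u yd] by (intro bexI[of _ yd]) auto
qed

lemma feasible_for_if_lp_val_eq_0:
  assumes "\<And>u. u \<in> Uset F h G x \<Longrightarrow> \<exists>yd\<in>Yd. lp_val B1 E B2c B2d d x u yd = 0"
  shows "feasible_for F h G B1 E B2c B2d d Yd x"
  unfolding feasible_for_def Yset_nonempty_iff using assms lp_val_eq_0_iff by blast

lemma eta_f_eq_0_if_lp_val_eq_0: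
  assumes "Uset F h G x \<noteq> {}"
    and "\<And>u. u \<in> Uset F h G x \<Longrightarrow> \<exists>yd\<in>Yd. lp_val B1 E B2c B2d d x u yd = 0"
  shows "eta_f F h G B1 E B2c B2d d Yd x = 0"
proof -
  have "r_f B1 E B2c B2d d Yd x u = 0" if u: "u \<in> Uset F h G x" for u
  proof -
    obtain yd where "yd \<in> Yd" "lp_val B1 E B2c B2d d x u yd = 0"
      using assms(2)[OF u] by blast
    then show ?thesis
      using r_f_le_lp_val[of yd Yd B1 E B2c B2d d x u] r_f_nonneg[of Yd B1 E B2c B2d d x u]
      by fastforce
  qed
  then have "r_f B1 E B2c B2d d Yd x ` Uset F h G x = {0}"
    using assms(1) by auto
  then show ?thesis by (simp add: eta_f_def)
qed

lemma eta_f_pos_and_not_feasible_for_if_r_f_pos: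
  assumes "bounded (Uset F h G x)" and "u \<in> Uset F h G x" and "r_f B1 E B2c B2d d Yd x u > 0"
  shows "eta_f F h G B1 E B2c B2d d Yd x > 0 \<and> \<not> feasible_for F h G B1 E B2c B2d d Yd x"
proof
  show "eta_f F h G B1 E B2c B2d d Yd x > 0"
    using assms(3) r_f_le_eta_f[OF assms(1,2)] by (rule less_le_trans)
  show "\<not> feasible_for F h G B1 E B2c B2d d Yd x"
  proof
    assume "feasible_for F h G B1 E B2c B2d d Yd x"
    then have "r_f B1 E B2c B2d d Yd x u \<le> 0"
      using assms(2) unfolding feasible_for_def by (blast intro: r_f_nonpos_if_Yset_nonempty)
    with assms(3) show False by linarith
  qed
qed

theorem corollary26:
  fixes A :: "real^'x^'ra" and b :: "real^'ra" and Ix :: "'x set"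
    and F :: "real^'x \<Rightarrow> real^'u^'ru" and h :: "real^'ru" and G :: "real^'x^'ru"
    and B1 :: "real^'x^'r" and E :: "real^'u^'r" and B2c :: "real^'yc^'r" and B2d :: "real^'yd^'r"
    and d :: "real^'r" and Yd :: "(real^'yd) set" and xs :: "real^'x"
  assumes Yd_fin: "finite Yd"
    and Yd_int: "\<forall>yd\<in>Yd. 0 \<le> yd \<and> (\<forall>j. yd $ j \<in> \<int>)"
    and U_ne: "\<forall>x\<in>Xset A b Ix. Uset F h G x \<noteq> {}"
    and U_bdd: "\<forall>x\<in>Xset A b Ix. bounded (Uset F h G x)"
    and xs_X: "xs \<in> Xset A b Ix"
  shows "(\<forall>Yhat. finite Yhat \<and> Yhat \<noteq> {} \<and> Yhat \<subseteq> Yd \<and>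
              eta_hat F h G B1 E B2c B2d d xs Yhat = 0 \<longrightarrow>
            eta_f F h G B1 E B2c B2d d Yd xs = 0 \<and> feasible_for F h G B1 E B2c B2d d Yd xs)
       \<and> (\<forall>us\<in>Uset F h G xs. r_f B1 E B2c B2d d Yd xs us > 0 \<longrightarrow>
            eta_f F h G B1 E B2c B2d d Yd xs > 0 \<and> \<not> feasible_for F h G B1 E B2c B2d d Yd xs)"
proof -
  let ?U = "Uset F h G xs"
  have U_xs_ne: "?U \<noteq> {}" and U_xs_bdd: "bounded ?U"
    using U_ne U_bdd xs_X by auto
  have "eta_f F h G B1 E B2c B2d d Yd xs = 0 \<and> feasible_for F h G B1 E B2c B2d d Yd xs"
    if "finite Yhat" "Yhat \<noteq> {}" "Yhat \<subseteq> Yd" "eta_hat F h G B1 E B2c B2d d xs Yhat = 0" for Yhat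
  proof -
    have lp_zero: "\<exists>yd\<in>Yd. lp_val B1 E B2c B2d d xs u yd = 0" if "u \<in> ?U" for u
      using ex_lp_val_eq_0_if_eta_hat_eq_0[OF \<open>finite Yhat\<close> \<open>Yhat \<noteq> {}\<close> U_xs_bdd] that \<open>Yhat \<subseteq> Yd\<close>
        \<open>eta_hat F h G B1 E B2c B2d d xs Yhat = 0\<close> by blast
    show ?thesis
      using eta_f_eq_0_if_lp_val_eq_0[OF U_xs_ne lp_zero] feasible_for_if_lp_val_eq_0[OF lp_zero]
      by blast
  qed
  moreover have "eta_f F h G B1 E B2c B2d d Yd xs > 0 \<and> \<not> feasible_for F h G B1 E B2c B2d d Yd xs"
    if "us \<in> ?U" "r_f B1 E B2c B2d d Yd xs us > 0" for us
    using eta_f_pos_and_not_feasible_for_if_r_f_pos[OF U_xs_bdd that] .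
  ultimately show ?thesis by blast
qed

end
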